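(* Let $\mathcal P$ be a homogeneous Poisson point process on $[0,1]\times\mathbb R_+$ with intensity $\mathrm dt\,\mathrm dx$, and let $q:\mathbb N\to\mathbb R_+$ be nondecreasing with $q(1)<q(\infty):=\sup_r q(r)$. If there are constants $c>0$ and $0<\beta<1$ such that $q(r)<c\exp(r^\beta)$ for all $r\in\mathbb N$, then $V(\mathcal M)<\infty$.
   Context: Label the atoms of $\mathcal P$ as $(T_r,X_{1,r})$, $r=1,2,\dots$, with $X_{1,1}<X_{1,2}<\cdots$; the atom $(T_r,X_{1,r})$ has value $X_{1,r}$, arrival time $T_r$ and final rank $r$. For $t\in\{T_r\}$ let $X_t,R_t$ be the value and final rank of the atom arriving at time $t$, and $X_t=R_t=\infty$ otherwise. Let $\mathbf X_t$ be the increasing sequence of values of atoms arrived by time $t$. A stopping rule is a random variable $\tau$ with values in $\{T_r\}\cup\{1\}$ such that $\{\tau\le t\}\in\sigma(\mathbf X_s,s\le t)$ for all $t$; its risk is $\mathbb E[q(R_\tau)]=\sum_r q(r)\mathbb P(\tau=T_r)+q(\infty)\mathbb P(\tau=1)$. A memoryless rule is a stopping rule $\tau=\inf\{t:X_t\le f(t)\}$ ($\inf\varnothing=1$) with $f:[0,1[\,\to\mathbb R$ nondecreasing. $V(\mathcal M)$ is the infimum of the risk over all memoryless rules. *)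

theory Defs
  imports "HOL-Probability.Probability"
begin

text \<open>Atoms of the point process are (T r, X r) for r \<ge> 1, labelled so that
  X 1 < X 2 < ... (r is the final rank). Number of atoms in a set A:\<close>
definition pp_count ::
  "(nat \<Rightarrow> 'a \<Rightarrow> real) \<Rightarrow> (nat \<Rightarrow> 'a \<Rightarrow> real) \<Rightarrow> (real \<times> real) set \<Rightarrow> 'a \<Rightarrow> nat" where
  "pp_count T X A \<omega> = card {r. 1 \<le> r \<and> (T r \<omega>, X r \<omega>) \<in> A}"

definition poisson_pp ::
  "'a measure \<Rightarrow> (nat \<Rightarrow> 'a \<Rightarrow> real) \<Rightarrow> (nat \<Rightarrow> 'a \<Rightarrow> real) \<Rightarrow> bool" where
  "poisson_pp M T X \<longleftrightarrow>
     prob_space M \<and>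
     (\<forall>r\<ge>1. T r \<in> borel_measurable M \<and> X r \<in> borel_measurable M) \<and>
     (\<forall>\<omega>\<in>space M. \<forall>r\<ge>1. 0 \<le> T r \<omega> \<and> T r \<omega> \<le> 1 \<and> 0 \<le> X r \<omega> \<and> X r \<omega> < X (Suc r) \<omega>) \<and>
     (\<forall>A \<in> sets (lborel :: (real \<times> real) measure).
        A \<subseteq> {0..1} \<times> {0..} \<longrightarrow> emeasure lborel A < \<infinity> \<longrightarrow>
        (\<forall>k::nat. measure M {\<omega> \<in> space M. finite {r. 1 \<le> r \<and> (T r \<omega>, X r \<omega>) \<in> A}
                                      \<and> pp_count T X A \<omega> = k}
                 = exp (- measure lborel A) * measure lborel A ^ k / fact k)) \<and>
     (\<forall>(I::nat set) (A :: nat \<Rightarrow> (real \<times> real) set). finite I \<longrightarrow>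
        (\<forall>i\<in>I. A i \<in> sets lborel \<and> A i \<subseteq> {0..1} \<times> {0..} \<and> emeasure lborel (A i) < \<infinity>) \<longrightarrow>
        disjoint_family_on A I \<longrightarrow>
        prob_space.indep_vars M (\<lambda>_. count_space UNIV) (\<lambda>i. pp_count T X (A i)) I)"

definition memoryless_tau ::
  "(real \<Rightarrow> real) \<Rightarrow> (nat \<Rightarrow> 'a \<Rightarrow> real) \<Rightarrow> (nat \<Rightarrow> 'a \<Rightarrow> real) \<Rightarrow> 'a \<Rightarrow> real" where
  "memoryless_tau f T X \<omega> =
     (let S = {T r \<omega> | r. 1 \<le> r \<and> T r \<omega> < 1 \<and> X r \<omega> \<le> f (T r \<omega>)}
      in if S = {} then 1 else Inf S)"

definition q_infty :: "(nat \<Rightarrow> real) \<Rightarrow> ennreal" where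
  "q_infty q = (SUP r\<in>{1..}. ennreal (q r))"

text \<open>Risk E[q(R_tau)] = sum_r q(r) P(tau = T_r) + q(\<infinity>) P(tau = 1).\<close>
definition risk ::
  "'a measure \<Rightarrow> (nat \<Rightarrow> 'a \<Rightarrow> real) \<Rightarrow> (nat \<Rightarrow> 'a \<Rightarrow> real) \<Rightarrow> (nat \<Rightarrow> real) \<Rightarrow> ('a \<Rightarrow> real) \<Rightarrow> ennreal" where
  "risk M T X q \<tau> =
     (\<Sum>r. ennreal (q (Suc r)) * emeasure M {\<omega> \<in> space M. \<tau> \<omega> = T (Suc r) \<omega>})
     + q_infty q * emeasure M {\<omega> \<in> space M. \<tau> \<omega> = 1}"

definition V_memoryless ::
  "'a measure \<Rightarrow> (nat \<Rightarrow> 'a \<Rightarrow> real) \<Rightarrow> (nat \<Rightarrow> 'a \<Rightarrow> real) \<Rightarrow> (nat \<Rightarrow> real) \<Rightarrow> ennreal" where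
  "V_memoryless M T X q =
     (INF f \<in> {f :: real \<Rightarrow> real. mono_on {0..<1} f}. risk M T X q (memoryless_tau f T X))"

end

theory Submission
  imports Defs
begin

text \<open>Take the memoryless rule whose threshold equals \<open>2 ^ (s * k)\<close> during stage \<open>k\<close>,
  i.e. for \<open>t \<in> [1 - 2 ^ -k, 1 - 2 ^ -(k + 1)[\<close>, with \<open>s = 2 * d + 3\<close> and
  \<open>d \<ge> \<beta> / (1 - \<beta>)\<close>. If it stops at the atom of rank \<open>r\<close> during stage \<open>k\<close>, the
  acceptance box of stage \<open>k - 1\<close> (area \<open>2 ^ (s * (k - 1) - k)\<close>) holds no atom, while the
  rest of \<open>[0, 1] \<times> [0, 2 ^ (s * k)]\<close> holds at least \<open>r\<close> atoms. Since Poisson counts of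
  disjoint regions are independent, the risk is at most the sum over \<open>k\<close> of
  \<open>exp (- area of the acceptance box) * E [N * q N]\<close> with \<open>N\<close> Poisson of mean at most
  \<open>2 ^ (s * k)\<close>. The growth bound on \<open>q\<close> together with
  \<open>r powr \<beta> \<le> m powr (\<beta> / (1 - \<beta>)) + r / m\<close> for \<open>m = 4 ^ (k + 1)\<close> makes
  \<open>E [N * q N]\<close> grow only like \<open>exp (2 ^ ((2 * d + 1) * k) + \<dots>)\<close>, which the factor
  \<open>exp (- 2 ^ ((2 * d + 2) * k - s))\<close> beats, so the series converges. Because the acceptance
  boxes grow, the rule stops almost surely, so the \<open>q_infty\<close> term vanishes; and arrival times
  are almost surely distinct, so the stopping time determines the rank.\<close>

section \<open>Poisson weights and elementary estimates\<close>

definition poisson_prob :: "real \<Rightarrow> nat \<Rightarrow> real" where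
  "poisson_prob l k = exp (- l) * l ^ k / fact k"

lemma poisson_prob_nonneg: "0 \<le> l \<Longrightarrow> 0 \<le> poisson_prob l k"
  by (simp add: poisson_prob_def)

lemma poisson_prob_exp_moment_sums:
  "(\<lambda>k. poisson_prob l k * exp (a * real k)) sums exp (l * (exp a - 1))"
proof -
  have "(\<lambda>k. (l * exp a) ^ k / fact k) sums exp (l * exp a)"
    using exp_converges[of "l * exp a"] by (simp add: divide_inverse mult.commute)
  then have "(\<lambda>k. exp (- l) * ((l * exp a) ^ k / fact k)) sums (exp (- l) * exp (l * exp a))"
    by (rule sums_mult)
  moreover have "exp (- l) * ((l * exp a) ^ k / fact k) = poisson_prob l k * exp (a * real k)" for k
    by (simp add: poisson_prob_def power_mult_distrib exp_of_nat_mult[symmetric] mult.commute)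
  moreover have "exp (- l) * exp (l * exp a) = exp (l * (exp a - 1))"
    by (simp add: exp_add[symmetric] algebra_simps)
  ultimately show ?thesis by simp
qed

lemma poisson_prob_sums: "poisson_prob l sums 1"
  using poisson_prob_exp_moment_sums[of l 0] by simp

lemma poisson_prob_at_least_two_le:
  assumes "0 \<le> l" shows "1 - poisson_prob l 0 - poisson_prob l 1 \<le> l ^ 2"
proof -
  have "(1 - l) * (1 + l) \<le> exp (- l) * (1 + l)"
    using exp_ge_add_one_self[of "- l"] assms by (intro mult_right_mono) auto
  then show ?thesis by (simp add: poisson_prob_def power2_eq_square algebra_simps)
qed

text \<open>Split at \<open>x = m powr (1 / (1 - \<beta>))\<close>: below it \<open>x powr \<beta>\<close> is at most
  \<open>m powr (\<beta> / (1 - \<beta>))\<close>, above it \<open>x powr (\<beta> - 1) \<le> 1 / m\<close>.\<close>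
lemma powr_le_powr_plus_divide:
  fixes x m \<beta> :: real
  assumes x: "0 \<le> x" and m: "0 < m" and \<beta>: "0 < \<beta>" "\<beta> < 1"
  shows "x powr \<beta> \<le> m powr (\<beta> / (1 - \<beta>)) + x / m"
proof -
  define J where "J = m powr (1 / (1 - \<beta>))"
  have J: "0 < J" using m by (simp add: J_def)
  have exponent: "1 / (1 - \<beta>) * (\<beta> - 1) = - 1" using \<beta> by (simp add: field_simps)
  have J_powr: "J powr \<beta> = m powr (\<beta> / (1 - \<beta>))" "J powr (\<beta> - 1) = 1 / m"
    unfolding J_def powr_powr exponent using m by (simp_all add: powr_minus_divide)
  show ?thesis
  proof (cases "x \<le> J")
    case True
    then have "x powr \<beta> \<le> m powr (\<beta> / (1 - \<beta>))"
      using x \<beta> J_powr(1) powr_mono2[of \<beta> x J] by simp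
    then show ?thesis using x m by (simp add: add_increasing2)
  next
    case False
    have "x powr \<beta> = x * x powr (\<beta> - 1)" using powr_add[of x 1 "\<beta> - 1"] False J by simp
    also have "\<dots> \<le> x * J powr (\<beta> - 1)"
      using False J \<beta> x by (intro mult_left_mono powr_mono2') auto
    finally have "x powr \<beta> \<le> x / m" using J_powr(2) by simp
    then show ?thesis by (meson add_increasing powr_ge_zero)
  qed
qed

lemma mult_le_by_powr_split:
  fixes x y c m \<beta> :: real
  assumes x: "0 \<le> x" and y: "0 \<le> y" "y \<le> c * exp (x powr \<beta>)"
    and m: "0 < m" and \<beta>: "0 < \<beta>" "\<beta> < 1"
  shows "x * y \<le> c * m * exp (m powr (\<beta> / (1 - \<beta>))) * exp (2 * x / m)"
proof -
  have "x / m \<le> exp (x / m)" using exp_ge_add_one_self[of "x / m"] by linarith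
  then have x_le: "x \<le> m * exp (x / m)" using m by (simp add: field_simps)
  have c: "0 \<le> c" using y by (smt (verit) exp_gt_zero zero_le_mult_iff)
  have "y \<le> c * exp (m powr (\<beta> / (1 - \<beta>)) + x / m)"
    using y(2) powr_le_powr_plus_divide[OF x m \<beta>] c by (smt (verit) exp_le_cancel_iff mult_left_mono)
  then have "x * y \<le> (m * exp (x / m)) * (c * exp (m powr (\<beta> / (1 - \<beta>)) + x / m))"
    using x_le x y(1) by (intro mult_mono) auto
  also have "\<dots> = c * m * exp (m powr (\<beta> / (1 - \<beta>))) * exp (2 * x / m)"
    by (simp add: exp_add[symmetric] field_simps)
  finally show ?thesis .
qed

lemma poisson_weighted_moment_le:
  fixes q :: "nat \<Rightarrow> real"
  assumes q: "\<forall>r\<ge>1. 0 \<le> q r \<and> q r \<le> c * exp (real r powr \<beta>)"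
    and \<beta>: "0 < \<beta>" "\<beta> < 1" and m: "4 \<le> m" and l: "0 \<le> l" "l \<le> L"
  shows "(\<Sum>j. ennreal (real j * q j * poisson_prob l j))
     \<le> ennreal (c * m * exp (m powr (\<beta> / (1 - \<beta>))) * exp (4 * L / m))"
proof -
  define C where "C = c * m * exp (m powr (\<beta> / (1 - \<beta>)))"
  have "0 \<le> c * exp (1 powr \<beta>)" using q by force
  then have "0 \<le> c" by (simp add: zero_le_mult_iff)
  then have C: "0 \<le> C" using m by (simp add: C_def)
  have term_le: "ennreal (real j * q j * poisson_prob l j)
      \<le> ennreal (C * (poisson_prob l j * exp (2 / m * real j)))" for j
  proof (cases "j = 0")
    case False
    then have "real j * q j \<le> C * exp (2 * real j / m)"
      unfolding C_def using q m \<beta> by (intro mult_le_by_powr_split) auto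
    then have "real j * q j * poisson_prob l j \<le> C * exp (2 * real j / m) * poisson_prob l j"
      using poisson_prob_nonneg[OF l(1)] by (rule mult_right_mono)
    then show ?thesis by (intro ennreal_leI) (simp add: mult_ac)
  qed simp
  have exp_le: "exp (2 / m) - 1 \<le> 4 / m" using real_exp_bound_lemma[of "2 / m"] m by simp
  have "(\<Sum>j. ennreal (real j * q j * poisson_prob l j))
      \<le> (\<Sum>j. ennreal (C * (poisson_prob l j * exp (2 / m * real j))))"
    by (intro suminf_le term_le) auto
  also have "\<dots> = ennreal (C * exp (l * (exp (2 / m) - 1)))"
    using C poisson_prob_nonneg[OF l(1)]
    by (intro suminf_ennreal_eq sums_mult poisson_prob_exp_moment_sums mult_nonneg_nonneg) auto
  also have "\<dots> \<le> ennreal (C * exp (4 * L / m))"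
  proof (intro ennreal_leI mult_left_mono C)
    have "l * (exp (2 / m) - 1) \<le> 4 * L / m"
      using mult_mono[OF l(2) exp_le] l m exp_ge_add_one_self[of "2 / m"] by (simp add: mult.commute)
    then show "exp (l * (exp (2 / m) - 1)) \<le> exp (4 * L / m)" by simp
  qed
  finally show ?thesis by (simp add: C_def)
qed

lemma nonpos_if_le_const_over_n:
  fixes x c :: real
  assumes "\<And>n. 0 < n \<Longrightarrow> x \<le> c / real n"
  shows "x \<le> 0"
  using assms by (intro LIMSEQ_le_const[OF lim_const_over_n[of c]]) (auto intro: exI[of _ 1])

lemma suminf_ennreal_swap: "(\<Sum>i. \<Sum>j. f i j) = (\<Sum>j. \<Sum>i. f i j :: ennreal)"
proof -
  have "(\<Sum>i. \<Sum>j. f i j) = (\<Sum>i. \<integral>\<^sup>+j. f i j \<partial>count_space UNIV)"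
    by (simp add: nn_integral_count_space_nat)
  also have "\<dots> = (\<integral>\<^sup>+j. (\<Sum>i. f i j) \<partial>count_space UNIV)"
    by (rule nn_integral_suminf[symmetric]) simp
  also have "\<dots> = (\<Sum>j. \<Sum>i. f i j)" by (simp add: nn_integral_count_space_nat)
  finally show ?thesis .
qed

lemma sum_tail_weights_le:
  fixes q :: "nat \<Rightarrow> real" and P :: "nat \<Rightarrow> nat \<Rightarrow> real"
  assumes q: "\<forall>r\<ge>1. 0 \<le> q r" "mono_on {1..} q" and P: "\<And>k j. 0 \<le> P k j"
  shows "(\<Sum>r. ennreal (q (Suc r)) * (\<Sum>k. \<Sum>j. ennreal (if Suc r \<le> j then P k j else 0)))
    \<le> (\<Sum>k. \<Sum>j. ennreal (real j * q j * P k j))"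
proof -
  have tail: "(\<Sum>r. ennreal (if Suc r \<le> j then q (Suc r) * P k j else 0)) \<le> ennreal (real j * q j * P k j)"
    for k j
  proof -
    have "(\<Sum>r. ennreal (if Suc r \<le> j then q (Suc r) * P k j else 0))
        = ennreal (\<Sum>r<j. q (Suc r) * P k j)"
      using q(1) P by (subst suminf_finite[of "{..<j}"]) (auto intro!: sum_ennreal sum.cong)
    also have "\<dots> \<le> ennreal (\<Sum>r<j. q j * P k j)"
      using q P by (intro ennreal_leI sum_mono mult_right_mono) (auto simp: mono_on_def)
    finally show ?thesis by (simp add: mult.assoc)
  qed
  have "ennreal (q (Suc r)) * (\<Sum>k. \<Sum>j. ennreal (if Suc r \<le> j then P k j else 0))
      = (\<Sum>k. \<Sum>j. ennreal (if Suc r \<le> j then q (Suc r) * P k j else 0))" for r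
  proof -
    have "ennreal (q (Suc r)) * (\<Sum>k. \<Sum>j. ennreal (if Suc r \<le> j then P k j else 0))
        = (\<Sum>k. \<Sum>j. ennreal (q (Suc r)) * ennreal (if Suc r \<le> j then P k j else 0))"
      by simp
    also have "\<dots> = (\<Sum>k. \<Sum>j. ennreal (if Suc r \<le> j then q (Suc r) * P k j else 0))"
      using q(1) P by (intro suminf_cong) (auto simp: ennreal_mult)
    finally show ?thesis .
  qed
  then have "(\<Sum>r. ennreal (q (Suc r)) * (\<Sum>k. \<Sum>j. ennreal (if Suc r \<le> j then P k j else 0)))
      = (\<Sum>r. \<Sum>k. \<Sum>j. ennreal (if Suc r \<le> j then q (Suc r) * P k j else 0))"
    by simp
  also have "\<dots> = (\<Sum>k. \<Sum>j. \<Sum>r. ennreal (if Suc r \<le> j then q (Suc r) * P k j else 0))"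
    by (subst suminf_ennreal_swap) (intro suminf_cong suminf_ennreal_swap)
  also have "\<dots> \<le> (\<Sum>k. \<Sum>j. ennreal (real j * q j * P k j))"
    by (intro suminf_le tail) auto
  finally show ?thesis .
qed

section \<open>Regions, stages and boxes\<close>

definition finite_region :: "(real \<times> real) set \<Rightarrow> bool" where
  "finite_region A \<longleftrightarrow> A \<in> sets lborel \<and> A \<subseteq> {0..1} \<times> {0..} \<and> emeasure lborel A < \<infinity>"

lemma finite_region_Times:
  fixes I :: "real set"
  assumes I: "I \<in> sets borel" "I \<subseteq> {0..1}" and h: "0 \<le> h"
  shows "finite_region (I \<times> {0..h})" "measure lborel (I \<times> {0..h}) = measure lborel I * h"
proof -
  have "I \<times> {0..h} \<in> sets (lborel \<Otimes>\<^sub>M lborel)" using I by (intro pair_measureI) auto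
  then have sets: "I \<times> {0..h} \<in> sets lborel" by (simp only: lborel_prod)
  have emeasure: "emeasure lborel (I \<times> {0..h}) = emeasure lborel I * ennreal h"
    using lborel.emeasure_pair_measure_Times[of I lborel "{0..h}"] I h by (simp add: lborel_prod)
  have "emeasure lborel I \<le> emeasure lborel {0..1::real}" using I by (intro emeasure_mono) auto
  then have "emeasure lborel I < \<infinity>" by (simp add: le_less_trans)
  then show "finite_region (I \<times> {0..h})"
    unfolding finite_region_def using I h sets emeasure by (auto simp: ennreal_mult_less_top)
  show "measure lborel (I \<times> {0..h}) = measure lborel I * h"
    unfolding measure_def emeasure using h by (simp add: enn2real_mult)
qed

lemma finite_region_Diff:
  assumes "finite_region A" "B \<in> sets lborel"
  shows "finite_region (A - B)" "measure lborel (A - B) \<le> measure lborel A"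
proof -
  have "emeasure lborel (A - B) \<le> emeasure lborel A"
    using assms by (intro emeasure_mono) (auto simp: finite_region_def)
  then show "finite_region (A - B)" using assms unfolding finite_region_def by (auto simp: less_le_trans)
  show "measure lborel (A - B) \<le> measure lborel A"
    using assms by (intro measure_mono_fmeasurable) (auto simp: finite_region_def fmeasurable_def)
qed

text \<open>Stage \<open>k\<close> is the time interval \<open>[1 - 1 / 2 ^ k, 1 - 1 / 2 ^ Suc k[\<close>.\<close>
definition stage :: "real \<Rightarrow> nat" where
  "stage t = nat \<lfloor>log 2 (1 / (1 - t))\<rfloor>"

lemma stage_bounds:
  assumes "0 \<le> t" "t < 1"
  shows "1 - 1 / 2 ^ stage t \<le> t" "t < 1 - 1 / 2 ^ Suc (stage t)"
proof -
  define y where "y = 1 / (1 - t)"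
  have y: "1 \<le> y" using assms by (simp add: y_def)
  define k where "k = stage t"
  have "0 \<le> log 2 y" using y by simp
  then have k: "real k = of_int \<lfloor>log 2 y\<rfloor>" by (simp add: k_def stage_def y_def)
  have "real k \<le> log 2 y" using k by linarith
  then have "2 ^ k \<le> y" using y by (simp add: le_log_iff powr_realpow)
  then show "1 - 1 / 2 ^ stage t \<le> t" using assms by (simp add: k_def y_def field_simps)
  have "log 2 y < real (Suc k)" using k by linarith
  then have "y < 2 ^ Suc k" using y by (simp add: log_less_iff powr_realpow del: of_nat_Suc)
  then show "t < 1 - 1 / 2 ^ Suc (stage t)" using assms by (simp add: k_def y_def field_simps)
qed

lemma stage_unique:
  assumes "1 - 1 / 2 ^ k \<le> t" "t < 1 - 1 / 2 ^ Suc k"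
  shows "stage t = k"
proof -
  have "1 / (2::real) ^ k \<le> 1" "0 < 1 / (2::real) ^ Suc k" by simp_all
  then have t: "0 \<le> t" "t < 1" using assms by linarith+
  have lower_mono: "1 - 1 / 2 ^ i \<le> 1 - 1 / (2::real) ^ j" if "i \<le> j" for i j
    using that by (simp add: frac_le)
  show ?thesis
  proof (rule ccontr)
    assume "stage t \<noteq> k"
    then consider "Suc (stage t) \<le> k" | "Suc k \<le> stage t" by linarith
    then show False
      using stage_bounds[OF t] assms by cases (use lower_mono in \<open>fastforce+\<close>)
  qed
qed

lemma stage_mono:
  assumes "0 \<le> t" "t \<le> t'" "t' < 1"
  shows "stage t \<le> stage t'"
proof -
  have "1 / (1 - t) \<le> 1 / (1 - t')" using assms by (simp add: frac_le)
  then show ?thesis using assms unfolding stage_def by (intro nat_mono floor_mono) simp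
qed

definition level :: "nat \<Rightarrow> nat \<Rightarrow> real" where
  "level s k = 2 ^ (s * k)"

definition threshold :: "nat \<Rightarrow> real \<Rightarrow> real" where
  "threshold s t = level s (stage t)"

lemma mono_on_threshold: "mono_on {0..<1} (threshold s)"
  unfolding mono_on_def threshold_def level_def
  by (auto intro!: power_increasing mult_le_mono2 stage_mono)

definition sample_box :: "real \<Rightarrow> (real \<times> real) set" where
  "sample_box h = {0..1} \<times> {0..h}"

text \<open>The acceptance region of the stage preceding \<open>k\<close>; it is empty for \<open>k = 0\<close>.\<close>
definition accept_box :: "nat \<Rightarrow> nat \<Rightarrow> (real \<times> real) set" where
  "accept_box s k = {max 0 (1 - 2 / 2 ^ k) ..< 1 - 1 / 2 ^ k} \<times> {0 .. level s (k - 1)}"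

definition rest_box :: "nat \<Rightarrow> nat \<Rightarrow> (real \<times> real) set" where
  "rest_box s k = sample_box (level s k) - accept_box s k"

lemma finite_region_sample_box:
  "0 \<le> h \<Longrightarrow> finite_region (sample_box h)" "0 \<le> h \<Longrightarrow> measure lborel (sample_box h) = h"
  unfolding sample_box_def using finite_region_Times[of "{0..1}" h] by auto

lemma finite_region_accept_box: "finite_region (accept_box s k)"
  unfolding accept_box_def by (intro finite_region_Times) (auto simp: level_def)

lemma measure_accept_box:
  assumes "1 \<le> k" shows "measure lborel (accept_box s k) = level s (k - 1) / 2 ^ k"
proof -
  have "(2::real) \<le> 2 ^ k" using power_increasing[of 1 k "2::real"] assms by simp
  then have lower: "max 0 (1 - 2 / 2 ^ k) = 1 - 2 / (2::real) ^ k" "0 \<le> 1 - 2 / (2::real) ^ k"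
    by (simp_all add: field_simps)
  have "measure lborel (accept_box s k)
      = measure lborel {1 - 2 / 2 ^ k ..< 1 - 1 / (2::real) ^ k} * level s (k - 1)"
    unfolding accept_box_def lower(1) using lower(2)
    by (intro finite_region_Times(2)) (auto simp: level_def order_trans[OF lower(2)])
  also have "\<dots> = level s (k - 1) / 2 ^ k" by (simp add: frac_le field_simps)
  finally show ?thesis .
qed

lemma measure_accept_box_ge:
  assumes "2 \<le> s" shows "real k / 2 ^ s \<le> measure lborel (accept_box s k)"
proof (cases "k = 0")
  case False
  have "real k * 2 ^ k \<le> (2 ^ k) * (2 ^ k :: real)"
    using less_exp[of k] by (intro mult_right_mono) (simp_all add: less_imp_le)
  also have "\<dots> = 2 ^ (2 * k)" by (simp add: power_add[symmetric] mult_2)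
  also have "\<dots> \<le> 2 ^ (s * k)" using assms by (intro power_increasing) auto
  also have "\<dots> = level s (k - 1) * 2 ^ s"
    using False by (simp add: level_def power_add[symmetric] algebra_simps)
  finally have "real k / 2 ^ s \<le> level s (k - 1) / 2 ^ k" by (simp add: field_simps)
  with False show ?thesis by (simp add: measure_accept_box)
qed simp

lemma measure_accept_box_eq_power:
  assumes "1 \<le> s" "1 \<le> k"
  shows "measure lborel (accept_box s k) = (2 ^ k) ^ (s - 1) / 2 ^ s"
proof -
  have "level s (k - 1) * 2 ^ s = 2 ^ (s * k)"
    using assms by (simp add: level_def power_add[symmetric] algebra_simps)
  moreover have "(2 ^ k) ^ (s - 1) * 2 ^ k = (2::real) ^ (s * k)"
    using assms by (simp add: power_mult[symmetric] power_add[symmetric] algebra_simps)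
  ultimately show ?thesis using assms by (simp add: measure_accept_box field_simps)
qed

lemma finite_region_rest_box:
  "finite_region (rest_box s k)" "measure lborel (rest_box s k) \<le> level s k"
  unfolding rest_box_def
  using finite_region_Diff[OF finite_region_sample_box(1)] finite_region_sample_box(2)
    finite_region_accept_box
  by (auto simp: level_def finite_region_def)

lemma accept_box_Int_rest_box: "accept_box s k \<inter> rest_box s k = {}"
  unfolding rest_box_def by auto

definition stage_prob :: "nat \<Rightarrow> nat \<Rightarrow> nat \<Rightarrow> real" where
  "stage_prob s k j =
     poisson_prob (measure lborel (accept_box s k)) 0 * poisson_prob (measure lborel (rest_box s k)) j"

lemma stage_prob_nonneg: "0 \<le> stage_prob s k j"
  unfolding stage_prob_def by (intro mult_nonneg_nonneg poisson_prob_nonneg) auto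

definition strip :: "nat \<Rightarrow> nat \<Rightarrow> real \<Rightarrow> (real \<times> real) set" where
  "strip m i h = {real i / m .. (real i + 1) / m} \<times> {0..h}"

lemma finite_region_strip:
  assumes "i < m" "0 \<le> h"
  shows "finite_region (strip m i h)" "measure lborel (strip m i h) = h / m"
proof -
  have "(real i + 1) / m \<le> 1" "real i / m \<le> (real i + 1) / m"
    using assms by (simp_all add: field_simps divide_right_mono)
  moreover have "0 \<le> real i / m" by simp
  ultimately have I: "{real i / m .. (real i + 1) / m} \<subseteq> {0..1}" by auto
  then show "finite_region (strip m i h)" unfolding strip_def using assms by (intro finite_region_Times) auto
  have "measure lborel (strip m i h) = ((real i + 1) / m - real i / m) * h"
    unfolding strip_def using I assms \<open>real i / m \<le> (real i + 1) / m\<close> by (subst finite_region_Times(2)) auto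
  then show "measure lborel (strip m i h) = h / m" by (simp add: diff_divide_distrib[symmetric])
qed

lemma strip_cover:
  assumes "0 \<le> t" "t \<le> 1" "0 < m"
  obtains i where "i < m" "real i / m \<le> t" "t \<le> (real i + 1) / m"
proof
  define j where "j = nat \<lfloor>t * m\<rfloor>"
  have j: "real j \<le> t * m" "t * m < real j + 1" using assms unfolding j_def by simp_all
  define i where "i = min (m - 1) j"
  show "i < m" using assms by (simp add: i_def)
  have "real i \<le> t * m" using j by (simp add: i_def)
  moreover have "t * m \<le> real i + 1"
  proof (cases "j \<le> m - 1")
    case False
    then have "real i + 1 = real m" using assms by (simp add: i_def)
    then show ?thesis using assms by (simp add: mult_left_le)
  qed (use j in \<open>simp add: i_def\<close>)
  ultimately show "real i / m \<le> t" "t \<le> (real i + 1) / m" using assms by (simp_all add: field_simps)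
qed

text \<open>\<open>m = 4 ^ (k + 1)\<close> is the splitting parameter of \<open>powr_le_powr_plus_divide\<close> used in
  stage \<open>k\<close>.\<close>
definition stage_bound :: "real \<Rightarrow> real \<Rightarrow> nat \<Rightarrow> nat \<Rightarrow> real" where
  "stage_bound c \<delta> s k = (let m = 4 ^ (k + 1) in
     exp (- measure lborel (accept_box s k)) * (c * m * exp (m powr \<delta>) * exp (4 * level s k / m)))"

lemma stage_moment_le:
  fixes q :: "nat \<Rightarrow> real"
  assumes q: "\<forall>r\<ge>1. 0 \<le> q r \<and> q r \<le> c * exp (real r powr \<beta>)" and \<beta>: "0 < \<beta>" "\<beta> < 1"
  shows "(\<Sum>j. ennreal (real j * q j * stage_prob s k j)) \<le> ennreal (stage_bound c (\<beta> / (1 - \<beta>)) s k)"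
proof -
  let ?A = "measure lborel (accept_box s k)" and ?R = "measure lborel (rest_box s k)"
  have "(\<Sum>j. ennreal (real j * q j * stage_prob s k j))
      = ennreal (exp (- ?A)) * (\<Sum>j. ennreal (real j * q j * poisson_prob ?R j))"
  proof -
    have "0 \<le> real j * q j * poisson_prob ?R j" for j
      using q poisson_prob_nonneg[of ?R j] by (cases "j = 0") auto
    then have "ennreal (real j * q j * stage_prob s k j)
        = ennreal (exp (- ?A)) * ennreal (real j * q j * poisson_prob ?R j)" for j
      by (simp add: stage_prob_def poisson_prob_def[of _ 0] ennreal_mult[symmetric] mult_ac)
    then show ?thesis by (simp add: ennreal_suminf_cmult)
  qed
  also have "\<dots> \<le> ennreal (exp (- ?A)) * ennreal (c * 4 ^ (k + 1) * exp ((4 ^ (k + 1)) powr (\<beta> / (1 - \<beta>)))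
      * exp (4 * level s k / 4 ^ (k + 1)))"
    using finite_region_rest_box(2)[of s k]
    by (intro mult_left_mono poisson_weighted_moment_le[OF q \<beta>]) auto
  also have "\<dots> = ennreal (stage_bound c (\<beta> / (1 - \<beta>)) s k)"
    using q
    by (simp add: stage_bound_def Let_def ennreal_mult'[symmetric])
  finally show ?thesis .
qed

lemma stage_bound_nonneg: "0 \<le> c \<Longrightarrow> 0 \<le> stage_bound c \<delta> s k"
  by (simp add: stage_bound_def Let_def)

lemma stage_exponent_le:
  fixes x :: real and d :: nat
  assumes d: "1 \<le> d" and x: "2 ^ (2 * d + 6) \<le> x"
  shows "4 * x ^ 2 + 4 ^ d * x ^ (2 * d) + x ^ (2 * d + 1) - x ^ (2 * d + 2) / 2 ^ (2 * d + 3) \<le> - x"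
proof -
  have x1: "1 \<le> x" using x by (smt (verit) one_le_power)
  define y where "y = x ^ (2 * d + 1)"
  have "x \<le> y" unfolding y_def using x1 power_increasing[of 1 "2 * d + 1" x] by simp
  have "(2::real) ^ (2 * d + 6) = 8 * 2 ^ (2 * d + 3)" by (simp add: power_add)
  then have "8 \<le> x / 2 ^ (2 * d + 3)" using x by (simp add: field_simps)
  then have "y * 8 \<le> y * (x / 2 ^ (2 * d + 3))" using \<open>x \<le> y\<close> x1 by (intro mult_left_mono) auto
  then have leading: "8 * y \<le> x ^ (2 * d + 2) / 2 ^ (2 * d + 3)" unfolding y_def by (simp add: field_simps)
  have "(4::real) ^ d = 2 ^ (2 * d)" by (simp add: power_mult)
  also have "\<dots> \<le> 2 ^ (2 * d + 6)" by (intro power_increasing) auto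
  finally have "(4::real) ^ d \<le> x" using x by linarith
  then have "4 ^ d * x ^ (2 * d) \<le> y" unfolding y_def using x1 by (simp add: mult_right_mono)
  moreover have "x ^ 2 \<le> y" unfolding y_def using x1 d by (intro power_increasing) auto
  ultimately show ?thesis using leading \<open>x \<le> y\<close> x1 unfolding y_def by linarith
qed

lemma stage_bound_le:
  fixes c \<delta> :: real and d k :: nat
  assumes d: "1 \<le> d" "\<delta> \<le> real d" and k: "2 * d + 6 \<le> k" and c: "0 \<le> c"
  shows "stage_bound c \<delta> (2 * d + 3) k \<le> c * exp (- real k)"
proof -
  define s where "s = 2 * d + 3"
  define x :: real where "x = 2 ^ k"
  define m :: real where "m = 4 ^ (k + 1)"
  have x: "2 ^ (2 * d + 6) \<le> x" "1 \<le> x" unfolding x_def using k by (auto intro: power_increasing)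
  have "((2::real) ^ k) ^ 2 = (2 ^ 2) ^ k" by (metis power_mult mult.commute)
  then have m_eq: "m = 4 * x ^ 2" unfolding m_def x_def by simp
  have m: "1 \<le> m" using m_eq x by (smt (verit) one_le_power)
  have accept: "measure lborel (accept_box s k) = x ^ (2 * d + 2) / 2 ^ (2 * d + 3)"
    using measure_accept_box_eq_power[of s k] k by (simp add: s_def x_def)
  have "m powr \<delta> \<le> m ^ d" using m d by (simp add: powr_mono powr_realpow[symmetric])
  also have "\<dots> = 4 ^ d * x ^ (2 * d)" unfolding m_eq by (simp add: power_mult_distrib power_mult[symmetric])
  finally have split: "m powr \<delta> \<le> 4 ^ d * x ^ (2 * d)" .
  have "level s k = x ^ (2 * d + 1) * x ^ 2"
    unfolding level_def x_def s_def by (simp add: power_mult[symmetric] power_add[symmetric] algebra_simps)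
  then have ratio: "4 * level s k / m = x ^ (2 * d + 1)" unfolding m_eq using x by simp
  have "ln m < m" using m by (intro ln_less_self) simp
  then have "ln m \<le> 4 * x ^ 2" using m_eq by simp
  have "stage_bound c \<delta> s k
      = c * (exp (ln m) * exp (m powr \<delta>) * exp (4 * level s k / m) * exp (- measure lborel (accept_box s k)))"
    unfolding stage_bound_def Let_def m_def[symmetric] using m by (simp add: mult_ac)
  also have "\<dots> = c * exp (ln m + m powr \<delta> + 4 * level s k / m - measure lborel (accept_box s k))"
    by (simp add: exp_add exp_diff exp_minus divide_inverse)
  also have "\<dots> \<le> c * exp (- x)"
    using stage_exponent_le[OF d(1) x(1)] \<open>ln m \<le> 4 * x ^ 2\<close> split ratio accept c
    by (intro mult_left_mono) auto
  also have "\<dots> \<le> c * exp (- real k)"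
    using less_exp[of k] c by (intro mult_left_mono) (simp_all add: x_def less_imp_le)
  finally show ?thesis by (simp add: s_def)
qed

lemma summable_stage_bound:
  assumes "1 \<le> d" "\<delta> \<le> real d" "0 \<le> c"
  shows "summable (stage_bound c \<delta> (2 * d + 3))"
proof (rule summable_comparison_test')
  show "summable (\<lambda>k. c * exp (- 1) ^ k)" by (intro summable_mult summable_geometric) simp
  fix k assume "2 * d + 6 \<le> k"
  then have "stage_bound c \<delta> (2 * d + 3) k \<le> c * exp (- real k)"
    using stage_bound_le[OF assms(1,2) _ assms(3)] by simp
  also have "\<dots> = c * exp (- 1) ^ k" by (simp add: exp_of_nat_mult[symmetric])
  finally show "norm (stage_bound c \<delta> (2 * d + 3) k) \<le> c * exp (- 1) ^ k"
    using stage_bound_nonneg[OF assms(3)] by simp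
qed

section \<open>The point process and the threshold rule\<close>

locale poisson_process =
  fixes M :: "'a measure" and T X :: "nat \<Rightarrow> 'a \<Rightarrow> real"
  assumes poisson: "poisson_pp M T X"
begin

sublocale prob_space M
  using poisson unfolding poisson_pp_def by blast

definition atoms :: "(real \<times> real) set \<Rightarrow> 'a \<Rightarrow> nat set" where
  "atoms A \<omega> = {r. 1 \<le> r \<and> (T r \<omega>, X r \<omega>) \<in> A}"

abbreviation N :: "(real \<times> real) set \<Rightarrow> 'a \<Rightarrow> nat" where
  "N A \<equiv> pp_count T X A"

lemma N_eq_card: "N A \<omega> = card (atoms A \<omega>)"
  by (simp add: pp_count_def atoms_def)

text \<open>The event whose probability \<open>poisson_pp\<close> prescribes; the finiteness conjunct matters
  because \<open>card\<close> of an infinite set is \<open>0\<close>.\<close>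
definition exact_count :: "(real \<times> real) set \<Rightarrow> nat \<Rightarrow> 'a set" where
  "exact_count A k = {\<omega> \<in> space M. finite (atoms A \<omega>) \<and> N A \<omega> = k}"

lemma measurable_arrival:
  "1 \<le> r \<Longrightarrow> T r \<in> borel_measurable M" "1 \<le> r \<Longrightarrow> X r \<in> borel_measurable M"
  using poisson unfolding poisson_pp_def by auto

lemma atom_bounds:
  assumes "\<omega> \<in> space M" "1 \<le> r"
  shows "0 \<le> T r \<omega>" "T r \<omega> \<le> 1" "0 \<le> X r \<omega>" "X r \<omega> < X (Suc r) \<omega>"
  using poisson assms unfolding poisson_pp_def by auto

lemma X_mono:
  assumes "\<omega> \<in> space M" "1 \<le> i" "i \<le> r"
  shows "X i \<omega> \<le> X r \<omega>"
  using assms(3)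
proof (induction r rule: dec_induct)
  case (step r)
  then show ?case using atom_bounds(4)[OF assms(1), of r] assms(2) by auto
qed simp

lemma prob_exact_count:
  "finite_region A \<Longrightarrow> prob (exact_count A k) = poisson_prob (measure lborel A) k"
  using poisson unfolding poisson_pp_def finite_region_def exact_count_def poisson_prob_def
    atoms_def pp_count_def
  by auto

lemma indep_counts:
  fixes I :: "nat set"
  assumes "finite I" "\<And>i. i \<in> I \<Longrightarrow> finite_region (A i)" "disjoint_family_on A I"
  shows "indep_vars (\<lambda>_. count_space UNIV) (\<lambda>i. N (A i)) I"
proof -
  have counts: "\<forall>(I::nat set) A. finite I \<longrightarrow> (\<forall>i\<in>I. finite_region (A i)) \<longrightarrow> disjoint_family_on A I \<longrightarrow>
      indep_vars (\<lambda>_. count_space UNIV) (\<lambda>i. N (A i)) I"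
    unfolding finite_region_def
    by (rule poisson[unfolded poisson_pp_def, THEN conjunct2, THEN conjunct2, THEN conjunct2,
          THEN conjunct2])
  show ?thesis by (rule counts[rule_format]) (use assms in auto)
qed

lemma measurable_count:
  assumes "finite_region A" shows "N A \<in> measurable M (count_space UNIV)"
proof -
  have "indep_vars (\<lambda>_. count_space UNIV) (\<lambda>i. N ((\<lambda>_. A) i)) {0::nat}"
    using assms by (intro indep_counts) (auto simp: disjoint_family_on_def)
  then show ?thesis unfolding indep_vars_def by auto
qed

lemma count_eq_in_events:
  "{\<omega> \<in> space M. N A \<omega> = k} \<in> events" if "finite_region A"
proof -
  have "{\<omega> \<in> space M. N A \<omega> = k} = N A -` {k} \<inter> space M" by auto
  then show ?thesis using measurable_sets[OF measurable_count[OF that], of "{k}"] by simp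
qed

lemma exact_count_in_events:
  assumes "finite_region A" shows "exact_count A k \<in> events"
proof (cases "k = 0")
  case True
  \<comment> \<open>Not a preimage of a count, but \<open>measure\<close> vanishes outside \<open>sets M\<close>.\<close>
  then have "prob (exact_count A k) \<noteq> 0"
    using prob_exact_count[OF assms] by (simp add: poisson_prob_def)
  then show ?thesis by (metis measure_notin_sets)
next
  case False
  then have "exact_count A k = {\<omega> \<in> space M. N A \<omega> = k}"
    unfolding exact_count_def by (auto simp: N_eq_card intro: card_ge_0_finite)
  then show ?thesis using count_eq_in_events[OF assms] by simp
qed

text \<open>The events \<open>exact_count A k\<close> are disjoint and their probabilities sum to \<open>1\<close>.\<close>
lemma AE_finite_atoms:
  assumes "finite_region A" shows "AE \<omega> in M. finite (atoms A \<omega>)"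
proof -
  have "(\<lambda>k. prob (exact_count A k)) sums prob (\<Union>k. exact_count A k)"
    using exact_count_in_events[OF assms]
    by (intro finite_measure_UNION) (auto simp: disjoint_family_on_def exact_count_def)
  then have "poisson_prob (measure lborel A) sums prob (\<Union>k. exact_count A k)"
    using prob_exact_count[OF assms] by simp
  then have "prob (\<Union>k. exact_count A k) = 1" using poisson_prob_sums sums_unique2 by blast
  then have "AE \<omega> in M. \<omega> \<in> (\<Union>k. exact_count A k)" by (rule AE_prob_1)
  then show ?thesis by eventually_elim (auto simp: exact_count_def)
qed

lemma prob_count_eq:
  assumes "finite_region A"
  shows "prob {\<omega> \<in> space M. N A \<omega> = k} = poisson_prob (measure lborel A) k"
proof -
  have "prob {\<omega> \<in> space M. N A \<omega> = k} = prob (exact_count A k)"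
    using AE_finite_atoms[OF assms] count_eq_in_events[OF assms] exact_count_in_events[OF assms]
    by (intro measure_eq_AE) (auto simp: exact_count_def)
  then show ?thesis using prob_exact_count[OF assms] by simp
qed

lemma prob_counts_disjoint:
  assumes "finite_region A" "finite_region B" "A \<inter> B = {}"
  shows "prob {\<omega> \<in> space M. N A \<omega> = i \<and> N B \<omega> = j}
       = poisson_prob (measure lborel A) i * poisson_prob (measure lborel B) j"
proof -
  define R where "R = (\<lambda>x::nat. if x = 0 then A else B)"
  define V where "V = (\<lambda>x::nat. if x = 0 then {i} else {j})"
  have "indep_vars (\<lambda>_. count_space UNIV) (\<lambda>x. N (R x)) {0, 1}"
    using assms by (intro indep_counts) (auto simp: R_def disjoint_family_on_def)
  then have "prob (\<Inter>x\<in>{0, 1}. N (R x) -` V x \<inter> space M)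
      = (\<Prod>x\<in>{0, 1}. prob (N (R x) -` V x \<inter> space M))"
    by (rule indep_varsD) auto
  moreover have "(\<Inter>x\<in>{0, 1}. N (R x) -` V x \<inter> space M) = {\<omega> \<in> space M. N A \<omega> = i \<and> N B \<omega> = j}"
    by (auto simp: R_def V_def)
  moreover have "N A -` {k} \<inter> space M = {\<omega> \<in> space M. N A \<omega> = k}" for A k by auto
  ultimately show ?thesis using prob_count_eq assms by (simp add: R_def V_def)
qed

lemma prob_at_least_two_atoms_le:
  assumes "finite_region A"
  shows "prob (space M - exact_count A 0 - exact_count A 1) \<le> (measure lborel A) ^ 2"
proof -
  have events: "exact_count A 0 \<in> events" "exact_count A 1 \<in> events"
    using exact_count_in_events[OF assms] by auto
  have "space M - exact_count A 0 - exact_count A 1 = space M - (exact_count A 0 \<union> exact_count A 1)"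
    by blast
  then have "prob (space M - exact_count A 0 - exact_count A 1)
      = 1 - prob (exact_count A 0 \<union> exact_count A 1)"
    using events by (simp add: prob_compl)
  also have "\<dots> = 1 - prob (exact_count A 0) - prob (exact_count A 1)"
    using events by (subst finite_measure_Union) (auto simp: exact_count_def)
  also have "\<dots> \<le> (measure lborel A) ^ 2"
    using prob_exact_count[OF assms] poisson_prob_at_least_two_le[of "measure lborel A"] by simp
  finally show ?thesis .
qed

lemma coincident_arrivals_in_crowded_strip:
  assumes \<omega>: "\<omega> \<in> space M" and rs: "1 \<le> r" "1 \<le> s" "r \<noteq> s" "T r \<omega> = T s \<omega>"
    and h: "X r \<omega> \<le> h" "X s \<omega> \<le> h" and m: "0 < m"
  obtains i where "i < m" "\<omega> \<notin> exact_count (strip m i h) 0" "\<omega> \<notin> exact_count (strip m i h) 1"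
proof -
  obtain i where i: "i < m" "real i / m \<le> T r \<omega>" "T r \<omega> \<le> (real i + 1) / m"
    using strip_cover[of "T r \<omega>" m] atom_bounds[OF \<omega> rs(1)] m by auto
  have "{r, s} \<subseteq> atoms (strip m i h) \<omega>"
    using i h rs atom_bounds[OF \<omega> rs(1)] atom_bounds[OF \<omega> rs(2)] by (auto simp: atoms_def strip_def)
  then have "\<omega> \<notin> exact_count (strip m i h) k" if "k < 2" for k
    using that rs(3) card_mono[of "atoms (strip m i h) \<omega>" "{r, s}"]
    by (auto simp: exact_count_def N_eq_card)
  with i(1) that show ?thesis by simp
qed

lemma prob_coincident_arrivals_le:
  fixes m :: nat
  assumes rs: "1 \<le> r" "1 \<le> s" "r \<noteq> s" and h: "0 \<le> h" and m: "0 < m"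
  shows "prob {\<omega> \<in> space M. T r \<omega> = T s \<omega> \<and> X r \<omega> \<le> h \<and> X s \<omega> \<le> h} \<le> h ^ 2 / m"
proof -
  define B where "B i = space M - exact_count (strip m i h) 0 - exact_count (strip m i h) 1" for i
  have B: "B i \<in> events" if "i < m" for i
    unfolding B_def using exact_count_in_events finite_region_strip(1)[OF that h] by auto
  have "{\<omega> \<in> space M. T r \<omega> = T s \<omega> \<and> X r \<omega> \<le> h \<and> X s \<omega> \<le> h} \<subseteq> (\<Union>i<m. B i)"
  proof
    fix \<omega> assume "\<omega> \<in> {\<omega> \<in> space M. T r \<omega> = T s \<omega> \<and> X r \<omega> \<le> h \<and> X s \<omega> \<le> h}"
    then have "\<omega> \<in> space M" "T r \<omega> = T s \<omega>" "X r \<omega> \<le> h" "X s \<omega> \<le> h" by auto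
    then obtain i where "i < m" "\<omega> \<notin> exact_count (strip m i h) 0" "\<omega> \<notin> exact_count (strip m i h) 1"
      using coincident_arrivals_in_crowded_strip rs m by metis
    then show "\<omega> \<in> (\<Union>i<m. B i)" using \<open>\<omega> \<in> space M\<close> unfolding B_def by blast
  qed
  then have "prob {\<omega> \<in> space M. T r \<omega> = T s \<omega> \<and> X r \<omega> \<le> h \<and> X s \<omega> \<le> h} \<le> prob (\<Union>i<m. B i)"
    using B by (intro finite_measure_mono) auto
  also have "\<dots> \<le> (\<Sum>i<m. prob (B i))" using B by (intro finite_measure_subadditive_finite) auto
  also have "\<dots> \<le> (\<Sum>i<m. (h / m) ^ 2)"
  proof (intro sum_mono)
    fix i assume "i \<in> {..<m}"
    then show "prob (B i) \<le> (h / m) ^ 2"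
      using prob_at_least_two_atoms_le[OF finite_region_strip(1)] finite_region_strip(2) h
      unfolding B_def by simp
  qed
  also have "\<dots> = h ^ 2 / m" using m by (simp add: power2_eq_square)
  finally show ?thesis .
qed

lemma AE_distinct_arrivals_below:
  assumes rs: "1 \<le> r" "1 \<le> s" "r \<noteq> s" and h: "0 \<le> h"
  shows "AE \<omega> in M. X r \<omega> \<le> h \<longrightarrow> X s \<omega> \<le> h \<longrightarrow> T r \<omega> \<noteq> T s \<omega>"
proof -
  note [measurable] = measurable_arrival[OF rs(1)] measurable_arrival[OF rs(2)]
  define E where "E = {\<omega> \<in> space M. T r \<omega> = T s \<omega> \<and> X r \<omega> \<le> h \<and> X s \<omega> \<le> h}"
  have E: "E \<in> events" unfolding E_def by measurable
  have "prob E \<le> 0"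
    unfolding E_def using prob_coincident_arrivals_le[OF rs h] by (intro nonpos_if_le_const_over_n) auto
  then have "E \<in> null_sets M" using E by (simp add: null_sets_def emeasure_eq_measure measure_le_0_iff)
  then show ?thesis by (rule AE_I') (auto simp: E_def)
qed

lemma AE_distinct_arrivals:
  "AE \<omega> in M. \<forall>r s. 1 \<le> r \<longrightarrow> 1 \<le> s \<longrightarrow> r \<noteq> s \<longrightarrow> T r \<omega> \<noteq> T s \<omega>"
proof -
  have "AE \<omega> in M. \<forall>r s K. 1 \<le> r \<longrightarrow> 1 \<le> s \<longrightarrow> r \<noteq> s \<longrightarrow>
      X r \<omega> \<le> real K \<longrightarrow> X s \<omega> \<le> real K \<longrightarrow> T r \<omega> \<noteq> T s \<omega>"
    unfolding AE_all_countable using AE_distinct_arrivals_below by simp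
  then show ?thesis
  proof eventually_elim
    case (elim \<omega>)
    show ?case
    proof (intro allI impI)
      fix r s :: nat assume "1 \<le> r" "1 \<le> s" "r \<noteq> s"
      moreover have "X r \<omega> \<le> real (nat \<lceil>max (X r \<omega>) (X s \<omega>)\<rceil>)" "X s \<omega> \<le> real (nat \<lceil>max (X r \<omega>) (X s \<omega>)\<rceil>)"
        by linarith+
      ultimately show "T r \<omega> \<noteq> T s \<omega>" using elim by blast
    qed
  qed
qed

definition stop_set :: "(real \<Rightarrow> real) \<Rightarrow> 'a \<Rightarrow> real set" where
  "stop_set f \<omega> = {T r \<omega> | r. 1 \<le> r \<and> T r \<omega> < 1 \<and> X r \<omega> \<le> f (T r \<omega>)}"

lemma memoryless_tau_eq:
  "memoryless_tau f T X \<omega> = (if stop_set f \<omega> = {} then 1 else Inf (stop_set f \<omega>))"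
  unfolding memoryless_tau_def stop_set_def Let_def by simp

lemma bdd_below_stop_set: "\<omega> \<in> space M \<Longrightarrow> bdd_below (stop_set f \<omega>)"
  unfolding stop_set_def bdd_below_def using atom_bounds(1) by blast

lemma memoryless_tau_less_1:
  assumes "\<omega> \<in> space M" "stop_set f \<omega> \<noteq> {}"
  shows "memoryless_tau f T X \<omega> < 1"
proof -
  obtain r where "T r \<omega> \<in> stop_set f \<omega>" "T r \<omega> < 1" using assms(2) unfolding stop_set_def by auto
  then have "Inf (stop_set f \<omega>) < 1" using cInf_lower[OF _ bdd_below_stop_set[OF assms(1)]] by fastforce
  then show ?thesis using assms(2) by (simp add: memoryless_tau_eq)
qed

lemma accept_box_atom_in_stop_set:
  assumes "i \<in> atoms (accept_box s k) \<omega>"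
  shows "T i \<omega> \<in> stop_set (threshold s) \<omega>" "T i \<omega> < 1 - 1 / 2 ^ k"
proof -
  have i: "1 \<le> i" "max 0 (1 - 2 / 2 ^ k) \<le> T i \<omega>" "T i \<omega> < 1 - 1 / 2 ^ k" "X i \<omega> \<le> level s (k - 1)"
    using assms unfolding atoms_def accept_box_def by auto
  then show "T i \<omega> < 1 - 1 / 2 ^ k" by simp
  have "k \<noteq> 0" using i(2,3) by (cases k) auto
  then have "(2::real) / 2 ^ k = 1 / 2 ^ (k - 1)" by (cases k) auto
  then have "stage (T i \<omega>) = k - 1" using i(2,3) \<open>k \<noteq> 0\<close> by (intro stage_unique) auto
  moreover have "T i \<omega> < 1" using i(3) by (smt (verit) divide_pos_pos zero_less_power)
  ultimately show "T i \<omega> \<in> stop_set (threshold s) \<omega>"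
    unfolding stop_set_def threshold_def using i(1,4) by auto
qed

text \<open>Without an atom in the stop set, every acceptance box is empty, and the probability of
  that decays to \<open>0\<close> because the boxes grow.\<close>
lemma AE_stop_set_nonempty:
  assumes s: "2 \<le> s"
  shows "AE \<omega> in M. stop_set (threshold s) \<omega> \<noteq> {}"
proof -
  define Z where "Z = (\<Inter>k. {\<omega> \<in> space M. N (accept_box s k) \<omega> = 0})"
  have Z: "Z \<in> events"
    unfolding Z_def using count_eq_in_events[OF finite_region_accept_box] by auto
  have "prob Z \<le> 2 ^ s / real k" if k: "0 < k" for k
  proof -
    define y where "y = real k / 2 ^ s"
    have y: "0 < y" using k by (simp add: y_def)
    have "prob Z \<le> prob {\<omega> \<in> space M. N (accept_box s k) \<omega> = 0}"
      using count_eq_in_events[OF finite_region_accept_box] by (intro finite_measure_mono) (auto simp: Z_def)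
    also have "\<dots> = exp (- measure lborel (accept_box s k))"
      by (simp add: prob_count_eq[OF finite_region_accept_box] poisson_prob_def)
    also have "\<dots> \<le> exp (- y)" using measure_accept_box_ge[OF s] by (simp add: y_def)
    also have "\<dots> \<le> 1 / y"
    proof -
      have "y \<le> exp y" using exp_ge_add_one_self[of y] by linarith
      then show ?thesis using y by (simp add: exp_minus divide_simps)
    qed
    also have "\<dots> = 2 ^ s / real k" by (simp add: y_def)
    finally show ?thesis .
  qed
  then have "prob Z \<le> 0" by (intro nonpos_if_le_const_over_n)
  then have "Z \<in> null_sets M" using Z by (simp add: null_sets_def emeasure_eq_measure measure_le_0_iff)
  moreover have "{\<omega> \<in> space M. \<not> stop_set (threshold s) \<omega> \<noteq> {}} \<subseteq> Z"
  proof
    fix \<omega> assume "\<omega> \<in> {\<omega> \<in> space M. \<not> stop_set (threshold s) \<omega> \<noteq> {}}"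
    then have "\<omega> \<in> space M" "atoms (accept_box s k) \<omega> = {}" for k
      using accept_box_atom_in_stop_set(1) by blast+
    then show "\<omega> \<in> Z" unfolding Z_def by (simp add: N_eq_card)
  qed
  ultimately show ?thesis by (rule AE_I')
qed

lemma Inf_stop_set_in:
  assumes \<omega>: "\<omega> \<in> space M" and fin: "\<forall>K::nat. finite (atoms (sample_box (real K)) \<omega>)"
    and ne: "stop_set (threshold s) \<omega> \<noteq> {}"
  shows "Inf (stop_set (threshold s) \<omega>) \<in> stop_set (threshold s) \<omega>"
proof -
  let ?S = "stop_set (threshold s) \<omega>"
  obtain t0 where t0: "t0 \<in> ?S" using ne by auto
  have "?S \<inter> {..t0} \<subseteq> (\<lambda>i. T i \<omega>) ` atoms (sample_box (threshold s t0)) \<omega>"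
  proof
    fix t assume "t \<in> ?S \<inter> {..t0}"
    then obtain i where i: "t = T i \<omega>" "1 \<le> i" "T i \<omega> < 1" "X i \<omega> \<le> threshold s (T i \<omega>)" "T i \<omega> \<le> t0"
      unfolding stop_set_def by auto
    have "t0 < 1" using t0 unfolding stop_set_def by auto
    then have "threshold s (T i \<omega>) \<le> threshold s t0"
      using mono_onD[OF mono_on_threshold] i atom_bounds[OF \<omega> i(2)] by auto
    then show "t \<in> (\<lambda>i. T i \<omega>) ` atoms (sample_box (threshold s t0)) \<omega>"
      using i atom_bounds[OF \<omega> i(2)] by (auto simp: atoms_def sample_box_def)
  qed
  moreover have "threshold s t0 = real (2 ^ (s * stage t0))" by (simp add: threshold_def level_def)
  ultimately have finite: "finite (?S \<inter> {..t0})" using fin finite_surj by metis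
  define t where "t = Min (?S \<inter> {..t0})"
  have t: "t \<in> ?S \<inter> {..t0}" unfolding t_def using finite t0 by (intro Min_in) auto
  have "Inf ?S = t"
  proof (rule cInf_eq_minimum)
    fix x assume "x \<in> ?S"
    then show "t \<le> x" using finite t unfolding t_def by (cases "x \<le> t0") auto
  qed (use t in auto)
  then show ?thesis using t by simp
qed

text \<open>If the rule stops at the atom of rank \<open>r\<close> in stage \<open>k\<close>, the acceptance box of the
  previous stage is empty, and the \<open>r\<close> atoms of rank at most \<open>r\<close> lie below level \<open>k\<close>,
  hence in the rest box.\<close>
lemma stop_at_rank_imp:
  assumes \<omega>: "\<omega> \<in> space M" and fin: "\<forall>K::nat. finite (atoms (sample_box (real K)) \<omega>)"
    and distinct: "\<forall>r s. 1 \<le> r \<longrightarrow> 1 \<le> s \<longrightarrow> r \<noteq> s \<longrightarrow> T r \<omega> \<noteq> T s \<omega>"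
    and ne: "stop_set (threshold s) \<omega> \<noteq> {}"
    and r: "1 \<le> r" and stop: "memoryless_tau (threshold s) T X \<omega> = T r \<omega>"
  shows "\<exists>k. N (accept_box s k) \<omega> = 0 \<and> r \<le> N (rest_box s k) \<omega>"
proof -
  let ?S = "stop_set (threshold s) \<omega>"
  have Inf: "Inf ?S = T r \<omega>" using stop ne by (simp add: memoryless_tau_eq)
  then obtain i where i: "1 \<le> i" "T i \<omega> < 1" "X i \<omega> \<le> threshold s (T i \<omega>)" "T i \<omega> = T r \<omega>"
    using Inf_stop_set_in[OF \<omega> fin ne] unfolding stop_set_def by auto
  then have "i = r" using distinct r by blast
  define k where "k = stage (T r \<omega>)"
  have Xr: "X r \<omega> \<le> level s k" using i \<open>i = r\<close> by (simp add: k_def threshold_def)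
  have no_accept: "atoms (accept_box s k) \<omega> = {}"
  proof (rule ccontr)
    assume "atoms (accept_box s k) \<omega> \<noteq> {}"
    then obtain j where j: "j \<in> atoms (accept_box s k) \<omega>" by auto
    have "1 - 1 / 2 ^ k \<le> T r \<omega>"
      using stage_bounds(1) i \<open>i = r\<close> atom_bounds[OF \<omega> r] by (simp add: k_def)
    moreover have "Inf ?S \<le> T j \<omega>"
      by (rule cInf_lower[OF accept_box_atom_in_stop_set(1)[OF j] bdd_below_stop_set[OF \<omega>]])
    ultimately show False using accept_box_atom_in_stop_set(2)[OF j] Inf by linarith
  qed
  have atoms_rest: "atoms (rest_box s k) \<omega> = atoms (sample_box (level s k)) \<omega>"
    using no_accept unfolding rest_box_def atoms_def by auto
  have "{1..r} \<subseteq> atoms (rest_box s k) \<omega>"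
  proof
    fix j assume j: "j \<in> {1..r}"
    then have "X j \<omega> \<le> level s k" using X_mono[OF \<omega>, of j r] Xr by auto
    then show "j \<in> atoms (rest_box s k) \<omega>"
      using j atom_bounds[OF \<omega>, of j] unfolding atoms_rest by (auto simp: atoms_def sample_box_def)
  qed
  moreover have "finite (atoms (rest_box s k) \<omega>)"
    using fin unfolding atoms_rest level_def by (metis of_nat_numeral of_nat_power)
  ultimately have "card {1..r} \<le> N (rest_box s k) \<omega>"
    unfolding N_eq_card by (rule card_mono[rotated])
  then have "r \<le> N (rest_box s k) \<omega>" by simp
  moreover have "N (accept_box s k) \<omega> = 0" using no_accept by (simp add: N_eq_card)
  ultimately show ?thesis by blast
qed

lemma AE_stop_at_rank_imp:
  assumes "2 \<le> s" "1 \<le> r"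
  shows "AE \<omega> in M. memoryless_tau (threshold s) T X \<omega> = T r \<omega> \<longrightarrow>
    (\<exists>k. N (accept_box s k) \<omega> = 0 \<and> r \<le> N (rest_box s k) \<omega>)"
proof -
  have "AE \<omega> in M. \<forall>K::nat. finite (atoms (sample_box (real K)) \<omega>)"
    unfolding AE_all_countable using AE_finite_atoms finite_region_sample_box(1) by auto
  with AE_space AE_distinct_arrivals AE_stop_set_nonempty[OF assms(1)] show ?thesis
    by eventually_elim (use stop_at_rank_imp assms(2) in auto)
qed

lemma emeasure_memoryless_tau_eq_1:
  assumes "2 \<le> s"
  shows "emeasure M {\<omega> \<in> space M. memoryless_tau (threshold s) T X \<omega> = 1} = 0"
proof -
  have "AE \<omega> in M. memoryless_tau (threshold s) T X \<omega> \<noteq> 1"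
    using AE_space AE_stop_set_nonempty[OF assms]
    by eventually_elim (use memoryless_tau_less_1 in force)
  then have "emeasure M {\<omega> \<in> space M. memoryless_tau (threshold s) T X \<omega> = 1} \<le> emeasure M {}"
    by (intro emeasure_mono_AE) auto
  then show ?thesis by simp
qed

definition stage_event :: "nat \<Rightarrow> nat \<Rightarrow> nat \<Rightarrow> 'a set" where
  "stage_event s k j = {\<omega> \<in> space M. N (accept_box s k) \<omega> = 0 \<and> N (rest_box s k) \<omega> = j}"

lemma stage_event_in_events: "stage_event s k j \<in> events"
proof -
  have "stage_event s k j
      = {\<omega> \<in> space M. N (accept_box s k) \<omega> = 0} \<inter> {\<omega> \<in> space M. N (rest_box s k) \<omega> = j}"
    by (auto simp: stage_event_def)
  then show ?thesis
    using count_eq_in_events[OF finite_region_accept_box[of s k], of 0]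
      count_eq_in_events[OF finite_region_rest_box(1)[of s k], of j]
    by simp
qed

lemma emeasure_stage_event: "emeasure M (stage_event s k j) = ennreal (stage_prob s k j)"
  using prob_counts_disjoint[OF finite_region_accept_box finite_region_rest_box(1) accept_box_Int_rest_box]
    stage_event_in_events
  by (simp add: stage_event_def emeasure_eq_measure stage_prob_def)

lemma emeasure_stop_at_rank_le:
  assumes "2 \<le> s" "1 \<le> r"
  shows "emeasure M {\<omega> \<in> space M. memoryless_tau (threshold s) T X \<omega> = T r \<omega>}
    \<le> (\<Sum>k. \<Sum>j. ennreal (if r \<le> j then stage_prob s k j else 0))"
proof -
  define V where "V k j = (if r \<le> j then stage_event s k j else {})" for k j
  have V: "V k j \<in> events" for k j by (simp add: V_def stage_event_in_events)
  have "AE \<omega> in M. \<omega> \<in> {\<omega> \<in> space M. memoryless_tau (threshold s) T X \<omega> = T r \<omega>} \<longrightarrow>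
      \<omega> \<in> (\<Union>k. \<Union>j. V k j)"
    using AE_stop_at_rank_imp[OF assms]
  proof eventually_elim
    case (elim \<omega>)
    show ?case
    proof
      assume "\<omega> \<in> {\<omega> \<in> space M. memoryless_tau (threshold s) T X \<omega> = T r \<omega>}"
      with elim obtain k where "\<omega> \<in> space M" "N (accept_box s k) \<omega> = 0" "r \<le> N (rest_box s k) \<omega>"
        by auto
      then have "\<omega> \<in> V k (N (rest_box s k) \<omega>)" by (simp add: V_def stage_event_def)
      then show "\<omega> \<in> (\<Union>k. \<Union>j. V k j)" by blast
    qed
  qed
  then have "emeasure M {\<omega> \<in> space M. memoryless_tau (threshold s) T X \<omega> = T r \<omega>}
      \<le> emeasure M (\<Union>k. \<Union>j. V k j)"
    using V by (intro emeasure_mono_AE) auto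
  also have "\<dots> \<le> (\<Sum>k. emeasure M (\<Union>j. V k j))"
    using V by (intro emeasure_subadditive_countably) auto
  also have "\<dots> \<le> (\<Sum>k. \<Sum>j. emeasure M (V k j))"
    using V by (intro suminf_le emeasure_subadditive_countably) auto
  also have "\<dots> = (\<Sum>k. \<Sum>j. ennreal (if r \<le> j then stage_prob s k j else 0))"
    by (intro suminf_cong) (simp add: V_def emeasure_stage_event)
  finally show ?thesis .
qed

lemma risk_threshold_rule_finite:
  fixes q :: "nat \<Rightarrow> real"
  assumes q: "\<forall>r\<ge>1. 0 \<le> q r \<and> q r \<le> c * exp (real r powr \<beta>)" "mono_on {1..} q"
    and \<beta>: "0 < \<beta>" "\<beta> < 1" and d: "1 \<le> d" "\<beta> / (1 - \<beta>) \<le> real d"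
  shows "risk M T X q (memoryless_tau (threshold (2 * d + 3)) T X) < \<top>"
proof -
  define s where "s = 2 * d + 3"
  have s: "2 \<le> s" by (simp add: s_def)
  have "0 \<le> c * exp (1 powr \<beta>)" using q by force
  then have c: "0 \<le> c" by (simp add: zero_le_mult_iff)
  have "(\<Sum>r. ennreal (q (Suc r)) * emeasure M {\<omega> \<in> space M. memoryless_tau (threshold s) T X \<omega> = T (Suc r) \<omega>})
      \<le> (\<Sum>r. ennreal (q (Suc r)) * (\<Sum>k. \<Sum>j. ennreal (if Suc r \<le> j then stage_prob s k j else 0)))"
    by (intro suminf_le mult_left_mono emeasure_stop_at_rank_le s) auto
  also have "\<dots> \<le> (\<Sum>k. \<Sum>j. ennreal (real j * q j * stage_prob s k j))"
    using q by (intro sum_tail_weights_le stage_prob_nonneg) auto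
  also have "\<dots> \<le> (\<Sum>k. ennreal (stage_bound c (\<beta> / (1 - \<beta>)) s k))"
    by (intro suminf_le stage_moment_le q(1) \<beta>) auto
  also have "\<dots> = ennreal (\<Sum>k. stage_bound c (\<beta> / (1 - \<beta>)) s k)"
    using summable_stage_bound[OF d c] stage_bound_nonneg[OF c] unfolding s_def
    by (intro suminf_ennreal2) auto
  finally have "(\<Sum>r. ennreal (q (Suc r))
      * emeasure M {\<omega> \<in> space M. memoryless_tau (threshold s) T X \<omega> = T (Suc r) \<omega>}) < \<top>"
    by (simp add: le_less_trans)
  then show ?thesis unfolding risk_def using emeasure_memoryless_tau_eq_1[OF s] by (simp add: s_def)
qed

end

theorem mainTheorem2:
  fixes M :: "'a measure" and T X :: "nat \<Rightarrow> 'a \<Rightarrow> real"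
    and q :: "nat \<Rightarrow> real" and c \<beta> :: real
  assumes "poisson_pp M T X"
    and "\<forall>r\<ge>1. 0 \<le> q r"
    and "mono_on {1..} q"
    and "ennreal (q 1) < q_infty q"
    and "c > 0" and "0 < \<beta>" and "\<beta> < 1"
    and "\<forall>r\<ge>1. q r < c * exp (real r powr \<beta>)"
  shows "V_memoryless M T X q < \<top>"
proof -
  interpret poisson_process M T X by standard (rule assms(1))
  define d where "d = max 1 (nat \<lceil>\<beta> / (1 - \<beta>)\<rceil>)"
  have d: "1 \<le> d" "\<beta> / (1 - \<beta>) \<le> real d" unfolding d_def by linarith+
  have q: "\<forall>r\<ge>1. 0 \<le> q r \<and> q r \<le> c * exp (real r powr \<beta>)"
    using assms(2,8) by (simp add: less_imp_le)
  have "V_memoryless M T X q \<le> risk M T X q (memoryless_tau (threshold (2 * d + 3)) T X)"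
    unfolding V_memoryless_def by (rule INF_lower) (simp add: mono_on_threshold)
  also have "\<dots> < \<top>" by (rule risk_threshold_rule_finite[OF q assms(3,6,7) d])
  finally show ?thesis .
qed

end
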